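(* Let $N, M_1, M_2, P, R_1, R_2, \widetilde{M}_2, \widetilde{P}$ be positive integers with $\widetilde{M}_2 \le M_2$, $\widetilde{P}\le P$. Let $\mathbf{y}\in\mathbb{C}^N$, $\mathbf{H}\in\mathbb{C}^{N\times M_1}$ and $\mathcal{M}\in\mathbb{R}^{N\times M_2\times P}$ be as in the context. Let $\mathbf{U}_2\in\mathbb{R}^{M_2\times\widetilde{M}_2}$ and $\mathbf{U}_3\in\mathbb{R}^{P\times\widetilde{P}}$ have orthonormal columns, and set $\widetilde{\mathcal{M}}=\mathcal{M}\times_2\mathbf{U}_2^\top\times_3\mathbf{U}_3^\top$ and $\widehat{\mathcal{M}}=\mathcal{M}\times_2\mathbf{U}_2\mathbf{U}_2^\top\times_3\mathbf{U}_3\mathbf{U}_3^\top$. Suppose $(\mathbf{A}^\star,\mathcal{B}^\star,\mathbf{C}^\star)$, with $\mathbf{A}^\star\in\mathbb{C}^{M_1\times R_1}$, $\mathcal{B}^\star\in\mathbb{C}^{R_1\times M_2\times R_2}$, $\mathbf{C}^\star\in\mathbb{C}^{R_2\times P}$, attains $$m_{\mathrm{TT}}:=\min_{\mathbf{A},\mathcal{B},\mathbf{C}}\Big\|\mathbf{y}-\sum_{r_1=1}^{R_1}\sum_{r_2=1}^{R_2} \mathbf{H}\mathbf{A}_{:r_1}\odot\big(\mathcal{M}\times_2\mathcal{B}_{r_1:r_2}\times_3\mathbf{C}_{r_2:}\big)\Big\|_F$$ over $\mathbf{A}\in\mathbb{C}^{M_1\times R_1},\mathcal{B}\in\mathbb{C}^{R_1\times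 M_2\times R_2},\mathbf{C}\in\mathbb{C}^{R_2\times P}$. Then $$\inf_{\substack{\mathbf{A}\in\mathbb{C}^{M_1\times R_1}\\ \widetilde{\mathcal{B}}\in\mathbb{C}^{R_1\times\widetilde{M}_2\times R_2}\\ \widetilde{\mathbf{C}}\in\mathbb{C}^{R_2\times\widetilde{P}}}}\Big\|\mathbf{y}-\sum_{r_1=1}^{R_1}\sum_{r_2=1}^{R_2} \mathbf{H}\mathbf{A}_{:r_1}\odot\big(\widetilde{\mathcal{M}}\times_2\widetilde{\mathcal{B}}_{r_1:r_2}\times_3\widetilde{\mathbf{C}}_{r_2:}\big)\Big\|_F \le m_{\mathrm{TT}}+\|\mathcal{M}-\widehat{\mathcal{M}}\|_F\sum_{r_1=1}^{R_1}\sum_{r_2=1}^{R_2}\|\mathbf{H}\mathbf{A}^\star_{:r_1}\|_\infty\|\mathcal{B}^\star_{r_1:r_2}\|_F\|\mathbf{C}^\star_{r_2:}\|_F.$$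
   Context: Let $x(t)$, $t\in\mathbb{Z}$, be a complex-valued input signal and $y(t)$ a complex-valued output signal, $t_0\in\mathbb{Z}$. Define $\mathbf{y}=(y(t_0),\dots,y(t_0+N-1))^\top\in\mathbb{C}^N$; $\mathbf{H}\in\mathbb{C}^{N\times M_1}$ with entries $h_{ni}=x(t_0+n-i)$ ($n=0,\dots,N-1$, $i=0,\dots,M_1-1$); and $\mathcal{M}\in\mathbb{R}^{N\times M_2\times P}$ with entries $\mathcal{M}_{njp}=|x(t_0+n-j)|^p$ ($j=0,\dots,M_2-1$, $p=0,\dots,P-1$, with $0^0=1$). Mode-$k$ product of a tensor $\mathcal{X}\in\mathbb{C}^{I_1\times I_2\times I_3}$ with a matrix $\mathbf{Q}\in\mathbb{C}^{n\times I_k}$: replace mode $k$ by $n$ with $(\mathcal{X}\times_k\mathbf{Q})_{\dots j\dots}=\sum_{i_k}\mathcal{X}_{\dots i_k\dots}q_{j i_k}$ (no conjugation). Mode-$k$ product with a vector $\mathbf{v}\in\mathbb{C}^{I_k}$ contracts mode $k$: $(\mathcal{X}\times_k\mathbf{v})=\sum_{i_k}\mathcal{X}_{\dots i_k\dots}v_{i_k}$, removing that mode; in particular $(\mathcal{M}\times_2\mathbf{b}\times_3\mathbf{c})_n=\sum_{j,p}\mathcal{M}_{njp}b_jc_p$. $\mathbf{A}_{:r}$ is the $r$-th column and $\mathbf{C}_{r:}$ the $r$-th row (as a vector) of a matrix; $\mathcal{B}_{r_1:r_2}\in\mathbb{C}^{M_2}$ is the mode-2 fiber of $\mathcal{B}$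 with first index $r_1$ and third index $r_2$. $\odot$ is the entrywise (Hadamard) product; $\|\cdot\|_F$ is the Frobenius (Euclidean for vectors) norm; $\|\cdot\|_\infty$ is the maximum modulus of the entries of a vector. *)

theory Defs
  imports "HOL-Analysis.Analysis"
begin

text \<open>Vectors, matrices and 3-tensors are represented as functions on natural
  indices (0-based); only entries within the stated index bounds are ever used.\<close>

definition yvec :: "(int \<Rightarrow> complex) \<Rightarrow> int \<Rightarrow> nat \<Rightarrow> complex" where
  "yvec y t0 n = y (t0 + int n)"

definition Hmat :: "(int \<Rightarrow> complex) \<Rightarrow> int \<Rightarrow> nat \<Rightarrow> nat \<Rightarrow> complex" where
  "Hmat x t0 n i = x (t0 + int n - int i)"

text \<open>Note \<open>0 ^ 0 = 1\<close> holds for \<open>^\<close> in Isabelle.\<close>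
definition Mten :: "(int \<Rightarrow> complex) \<Rightarrow> int \<Rightarrow> nat \<Rightarrow> nat \<Rightarrow> nat \<Rightarrow> real" where
  "Mten x t0 n j p = cmod (x (t0 + int n - int j)) ^ p"

text \<open>Entry n of the model
  \<open>\<Sum>r1 r2. (H A_{:r1}) \<odot> (T \<times>_2 B_{r1:r2} \<times>_3 C_{r2:})\<close>,
  where T has mode sizes (N, J, Q).\<close>
definition model ::
  "nat \<Rightarrow> nat \<Rightarrow> nat \<Rightarrow> nat \<Rightarrow> nat \<Rightarrow> (nat \<Rightarrow> nat \<Rightarrow> complex) \<Rightarrow> (nat \<Rightarrow> nat \<Rightarrow> nat \<Rightarrow> real)
   \<Rightarrow> (nat \<Rightarrow> nat \<Rightarrow> complex) \<Rightarrow> (nat \<Rightarrow> nat \<Rightarrow> nat \<Rightarrow> complex) \<Rightarrow> (nat \<Rightarrow> nat \<Rightarrow> complex)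
   \<Rightarrow> nat \<Rightarrow> complex" where
  "model M1 J Q R1 R2 H T A B C n =
     (\<Sum>r1<R1. \<Sum>r2<R2.
        (\<Sum>i<M1. H n i * A i r1) *
        (\<Sum>j<J. \<Sum>p<Q. complex_of_real (T n j p) * B r1 j r2 * C r2 p))"

definition resid ::
  "nat \<Rightarrow> nat \<Rightarrow> nat \<Rightarrow> nat \<Rightarrow> nat \<Rightarrow> nat \<Rightarrow> (nat \<Rightarrow> complex) \<Rightarrow> (nat \<Rightarrow> nat \<Rightarrow> complex)
   \<Rightarrow> (nat \<Rightarrow> nat \<Rightarrow> nat \<Rightarrow> real) \<Rightarrow> (nat \<Rightarrow> nat \<Rightarrow> complex) \<Rightarrow> (nat \<Rightarrow> nat \<Rightarrow> nat \<Rightarrow> complex)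
   \<Rightarrow> (nat \<Rightarrow> nat \<Rightarrow> complex) \<Rightarrow> real" where
  "resid N M1 J Q R1 R2 yv H T A B C =
     sqrt (\<Sum>n<N. (cmod (yv n - model M1 J Q R1 R2 H T A B C n))\<^sup>2)"

definition orthonormal_cols :: "nat \<Rightarrow> nat \<Rightarrow> (nat \<Rightarrow> nat \<Rightarrow> real) \<Rightarrow> bool" where
  "orthonormal_cols m k U \<longleftrightarrow>
     (\<forall>a<k. \<forall>b<k. (\<Sum>j<m. U j a * U j b) = (if a = b then 1 else 0))"

text \<open>\<open>T \<times>_2 U2\<^sup>T \<times>_3 U3\<^sup>T\<close> for T of size N x M2 x P.\<close>
definition Mtilde :: "nat \<Rightarrow> nat \<Rightarrow> (nat \<Rightarrow> nat \<Rightarrow> real) \<Rightarrow> (nat \<Rightarrow> nat \<Rightarrow> real)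
   \<Rightarrow> (nat \<Rightarrow> nat \<Rightarrow> nat \<Rightarrow> real) \<Rightarrow> nat \<Rightarrow> nat \<Rightarrow> nat \<Rightarrow> real" where
  "Mtilde M2 P U2 U3 T n k q = (\<Sum>j<M2. \<Sum>p<P. T n j p * U2 j k * U3 p q)"

text \<open>\<open>T \<times>_2 U2 U2\<^sup>T \<times>_3 U3 U3\<^sup>T\<close> for T of size N x M2 x P.\<close>
definition Mhat :: "nat \<Rightarrow> nat \<Rightarrow> nat \<Rightarrow> nat \<Rightarrow> (nat \<Rightarrow> nat \<Rightarrow> real) \<Rightarrow> (nat \<Rightarrow> nat \<Rightarrow> real)
   \<Rightarrow> (nat \<Rightarrow> nat \<Rightarrow> nat \<Rightarrow> real) \<Rightarrow> nat \<Rightarrow> nat \<Rightarrow> nat \<Rightarrow> real" where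
  "Mhat M2 P M2t Pt U2 U3 T n j p =
     (\<Sum>j'<M2. \<Sum>p'<P. T n j' p' * (\<Sum>k<M2t. U2 j k * U2 j' k) * (\<Sum>q<Pt. U3 p q * U3 p' q))"

definition frob3 :: "nat \<Rightarrow> nat \<Rightarrow> nat \<Rightarrow> (nat \<Rightarrow> nat \<Rightarrow> nat \<Rightarrow> real) \<Rightarrow> real" where
  "frob3 N J Q T = sqrt (\<Sum>n<N. \<Sum>j<J. \<Sum>p<Q. (T n j p)\<^sup>2)"

definition vnorm :: "nat \<Rightarrow> (nat \<Rightarrow> complex) \<Rightarrow> real" where
  "vnorm K v = sqrt (\<Sum>k<K. (cmod (v k))\<^sup>2)"

definition vnorm_inf :: "nat \<Rightarrow> (nat \<Rightarrow> complex) \<Rightarrow> real" where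
  "vnorm_inf K v = Max ((\<lambda>k. cmod (v k)) ` {..<K})"

end

theory Submission imports Defs begin

text \<open>With the compressed factors \<open>U\<^sub>2\<^sup>T b\<close> and \<open>U\<^sub>3\<^sup>T c\<close>, the compressed model coincides with the
  model built on \<open>Mhat\<close> with the original factors, since
  \<open>Mtilde \<times>\<^sub>2 U\<^sub>2\<^sup>T b \<times>\<^sub>3 U\<^sub>3\<^sup>T c = M \<times>\<^sub>2 U\<^sub>2U\<^sub>2\<^sup>T b \<times>\<^sub>3 U\<^sub>3U\<^sub>3\<^sup>T c = Mhat \<times>\<^sub>2 b \<times>\<^sub>3 c\<close>.
  The model is linear in the tensor, so by the triangle inequality the compressed residual
  exceeds the residual of \<open>(A, B, C)\<close> by at most the norm of the model built on \<open>M - Mhat\<close>,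
  and each term of that model is bounded by the sup norm of \<open>HA\<close> times the Frobenius norm
  of \<open>M - Mhat\<close> times \<open>\<parallel>b\<parallel> \<parallel>c\<parallel>\<close> (Cauchy-Schwarz).\<close>

lemma vnorm_conv_L2_set: "vnorm K v = L2_set (\<lambda>k. cmod (v k)) {..<K}"
  by (simp add: vnorm_def L2_set_def)

lemma vnorm_nonneg: "0 \<le> vnorm K v"
  by (simp add: vnorm_conv_L2_set)

lemma vnorm_triangle: "vnorm K (\<lambda>k. u k + v k) \<le> vnorm K u + vnorm K v"
proof -
  have "vnorm K (\<lambda>k. u k + v k) \<le> L2_set (\<lambda>k. cmod (u k) + cmod (v k)) {..<K}"
    unfolding vnorm_conv_L2_set by (rule L2_set_mono) (auto simp: norm_triangle_ineq)
  also have "\<dots> \<le> vnorm K u + vnorm K v"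
    unfolding vnorm_conv_L2_set by (rule L2_set_triangle_ineq)
  finally show ?thesis .
qed

lemma vnorm_sum_le:
  assumes "finite S"
  shows "vnorm K (\<lambda>k. \<Sum>r\<in>S. f r k) \<le> (\<Sum>r\<in>S. vnorm K (f r))"
  using assms
proof (induction S rule: finite_induct)
  case empty
  then show ?case by (simp add: vnorm_def)
next
  case (insert s S)
  have "vnorm K (\<lambda>k. \<Sum>r\<in>insert s S. f r k) = vnorm K (\<lambda>k. f s k + (\<Sum>r\<in>S. f r k))"
    using insert by simp
  also have "\<dots> \<le> vnorm K (f s) + vnorm K (\<lambda>k. \<Sum>r\<in>S. f r k)"
    by (rule vnorm_triangle)
  also have "\<dots> \<le> vnorm K (f s) + (\<Sum>r\<in>S. vnorm K (f r))"
    using insert by simp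
  finally show ?case
    using insert by simp
qed

lemma norm_le_vnorm_inf: "k < K \<Longrightarrow> cmod (h k) \<le> vnorm_inf K h"
  unfolding vnorm_inf_def by (intro Max_ge) auto

lemma vnorm_inf_nonneg: "0 < K \<Longrightarrow> 0 \<le> vnorm_inf K h"
  using norm_le_vnorm_inf[of 0 K h] norm_ge_zero order_trans by blast

lemma vnorm_mult_le:
  assumes "0 < K"
  shows "vnorm K (\<lambda>k. h k * g k) \<le> vnorm_inf K h * vnorm K g"
proof -
  have "vnorm K (\<lambda>k. h k * g k) \<le> L2_set (\<lambda>k. vnorm_inf K h * cmod (g k)) {..<K}"
    unfolding vnorm_conv_L2_set norm_mult
    by (rule L2_set_mono) (auto intro!: mult_right_mono norm_le_vnorm_inf)
  also have "\<dots> = vnorm_inf K h * vnorm K g"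
    unfolding vnorm_conv_L2_set
    by (rule L2_set_right_distrib[symmetric]) (rule vnorm_inf_nonneg[OF assms])
  finally show ?thesis .
qed

lemma sum_swap_pairs:
  "(\<Sum>a\<in>A. \<Sum>b\<in>B. \<Sum>c\<in>C. \<Sum>d\<in>D. f a b c d) = (\<Sum>c\<in>C. \<Sum>d\<in>D. \<Sum>a\<in>A. \<Sum>b\<in>B. f a b c d)"
proof -
  have "(\<Sum>a\<in>A. \<Sum>b\<in>B. \<Sum>c\<in>C. \<Sum>d\<in>D. f a b c d) = (\<Sum>a\<in>A. \<Sum>c\<in>C. \<Sum>b\<in>B. \<Sum>d\<in>D. f a b c d)"
    by (intro sum.cong refl sum.swap)
  also have "\<dots> = (\<Sum>c\<in>C. \<Sum>a\<in>A. \<Sum>d\<in>D. \<Sum>b\<in>B. f a b c d)"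
    by (subst sum.swap) (intro sum.cong refl sum.swap)
  also have "\<dots> = (\<Sum>c\<in>C. \<Sum>d\<in>D. \<Sum>a\<in>A. \<Sum>b\<in>B. f a b c d)"
    by (intro sum.cong refl sum.swap)
  finally show ?thesis .
qed

definition tensor_contract ::
  "nat \<Rightarrow> nat \<Rightarrow> (nat \<Rightarrow> nat \<Rightarrow> real) \<Rightarrow> (nat \<Rightarrow> complex) \<Rightarrow> (nat \<Rightarrow> complex) \<Rightarrow> complex" where
  "tensor_contract J Q T b c = (\<Sum>j<J. \<Sum>p<Q. complex_of_real (T j p) * b j * c p)"

lemma model_conv_tensor_contract:
  "model M1 J Q R1 R2 H T A B C n =
     (\<Sum>r1<R1. \<Sum>r2<R2. (\<Sum>i<M1. H n i * A i r1) * tensor_contract J Q (T n) (\<lambda>j. B r1 j r2) (C r2))"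
  by (simp add: model_def tensor_contract_def)

lemma tensor_contract_diff:
  "tensor_contract J Q (\<lambda>j p. S j p - T j p) b c = tensor_contract J Q S b c - tensor_contract J Q T b c"
  by (simp add: tensor_contract_def sum_subtractf left_diff_distrib)

lemma model_diff:
  "model M1 J Q R1 R2 H S A B C n - model M1 J Q R1 R2 H T A B C n
     = model M1 J Q R1 R2 H (\<lambda>n j p. S n j p - T n j p) A B C n"
  by (simp add: model_conv_tensor_contract tensor_contract_diff right_diff_distrib sum_subtractf)

lemma tensor_contract_mode_products:
  "tensor_contract K L (\<lambda>k l. \<Sum>j<J. \<Sum>p<Q. T j p * U j k * V p l) b c
     = tensor_contract J Q T (\<lambda>j. \<Sum>k<K. of_real (U j k) * b k) (\<lambda>p. \<Sum>l<L. of_real (V p l) * c l)"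
proof -
  have "tensor_contract K L (\<lambda>k l. \<Sum>j<J. \<Sum>p<Q. T j p * U j k * V p l) b c
      = (\<Sum>k<K. \<Sum>l<L. \<Sum>j<J. \<Sum>p<Q. of_real (T j p) * (of_real (U j k) * b k) * (of_real (V p l) * c l))"
    by (simp add: tensor_contract_def of_real_sum sum_distrib_left sum_distrib_right mult_ac)
  also have "\<dots> = (\<Sum>j<J. \<Sum>p<Q. \<Sum>k<K. \<Sum>l<L. of_real (T j p) * (of_real (U j k) * b k) * (of_real (V p l) * c l))"
    by (rule sum_swap_pairs)
  also have "\<dots> = tensor_contract J Q T (\<lambda>j. \<Sum>k<K. of_real (U j k) * b k) (\<lambda>p. \<Sum>l<L. of_real (V p l) * c l)"
    by (simp add: tensor_contract_def sum_distrib_left sum_distrib_right mult_ac)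
  finally show ?thesis .
qed

lemma sum_gram_apply:
  "(\<Sum>k<K. of_real (U j' k) * (\<Sum>j<J. of_real (U j k) * b j))
     = (\<Sum>j<J. of_real (\<Sum>k<K. U j k * U j' k) * (b j :: complex))"
  by (simp add: sum_distrib_left sum_distrib_right mult_ac) (rule sum.swap)

lemma model_Mtilde_eq_model_Mhat:
  "model M1 M2t Pt R1 R2 H (Mtilde M2 P U2 U3 T) A
       (\<lambda>r1 k r2. \<Sum>j<M2. of_real (U2 j k) * B r1 j r2) (\<lambda>r2 q. \<Sum>p<P. of_real (U3 p q) * C r2 p) n
     = model M1 M2 P R1 R2 H (Mhat M2 P M2t Pt U2 U3 T) A B C n"
proof -
  have Mtilde_slice: "Mtilde M2 P U2 U3 T n = (\<lambda>k q. \<Sum>j<M2. \<Sum>p<P. T n j p * U2 j k * U3 p q)"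
    by (simp add: Mtilde_def fun_eq_iff)
  have Mhat_slice: "Mhat M2 P M2t Pt U2 U3 T n
      = (\<lambda>j p. \<Sum>j'<M2. \<Sum>p'<P. T n j' p' * (\<Sum>k<M2t. U2 j k * U2 j' k) * (\<Sum>q<Pt. U3 p q * U3 p' q))"
    by (simp add: Mhat_def fun_eq_iff)
  show ?thesis
    unfolding model_conv_tensor_contract Mtilde_slice Mhat_slice tensor_contract_mode_products
    by (intro sum.cong refl arg_cong2[where f = "(*)"] arg_cong2[where f = "tensor_contract M2 P (T n)"]
        ext sum_gram_apply)
qed

lemma norm_tensor_contract_le:
  "cmod (tensor_contract J Q T b c) \<le> sqrt (\<Sum>j<J. \<Sum>p<Q. (T j p)\<^sup>2) * (vnorm J b * vnorm Q c)"
proof -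
  let ?S = "{..<J} \<times> {..<Q}"
  have "cmod (tensor_contract J Q T b c) \<le> (\<Sum>j<J. \<Sum>p<Q. cmod (of_real (T j p) * b j * c p))"
    unfolding tensor_contract_def by (rule order_trans[OF norm_sum sum_mono]) (rule norm_sum)
  also have "\<dots> = (\<Sum>(j, p)\<in>?S. \<bar>T j p\<bar> * \<bar>cmod (b j) * cmod (c p)\<bar>)"
    by (simp add: sum.cartesian_product norm_mult mult.assoc)
  also have "\<dots> \<le> L2_set (\<lambda>(j, p). T j p) ?S * L2_set (\<lambda>(j, p). cmod (b j) * cmod (c p)) ?S"
    using L2_set_mult_ineq[of "\<lambda>(j, p). T j p" "\<lambda>(j, p). cmod (b j) * cmod (c p)" ?S]
    by (simp add: case_prod_unfold)
  also have "L2_set (\<lambda>(j, p). T j p) ?S = sqrt (\<Sum>j<J. \<Sum>p<Q. (T j p)\<^sup>2)"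
    by (simp add: L2_set_def sum.cartesian_product case_prod_unfold)
  also have "L2_set (\<lambda>(j, p). cmod (b j) * cmod (c p)) ?S = vnorm J b * vnorm Q c"
  proof -
    have "(\<Sum>(j, p)\<in>?S. (cmod (b j) * cmod (c p))\<^sup>2) = (\<Sum>j<J. (cmod (b j))\<^sup>2) * (\<Sum>p<Q. (cmod (c p))\<^sup>2)"
      by (simp add: sum_product power_mult_distrib sum.cartesian_product)
    then show ?thesis
      by (simp add: L2_set_def vnorm_def case_prod_unfold real_sqrt_mult)
  qed
  finally show ?thesis .
qed

lemma vnorm_tensor_contract_le:
  "vnorm N (\<lambda>n. tensor_contract J Q (T n) b c) \<le> frob3 N J Q T * (vnorm J b * vnorm Q c)"
proof -
  have "vnorm N (\<lambda>n. tensor_contract J Q (T n) b c)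
      \<le> L2_set (\<lambda>n. sqrt (\<Sum>j<J. \<Sum>p<Q. (T n j p)\<^sup>2) * (vnorm J b * vnorm Q c)) {..<N}"
    unfolding vnorm_conv_L2_set[of N] by (rule L2_set_mono) (auto intro: norm_tensor_contract_le)
  also have "\<dots> = L2_set (\<lambda>n. sqrt (\<Sum>j<J. \<Sum>p<Q. (T n j p)\<^sup>2)) {..<N} * (vnorm J b * vnorm Q c)"
    by (rule L2_set_left_distrib[symmetric]) (simp add: vnorm_nonneg)
  also have "L2_set (\<lambda>n. sqrt (\<Sum>j<J. \<Sum>p<Q. (T n j p)\<^sup>2)) {..<N} = frob3 N J Q T"
    by (simp add: L2_set_def frob3_def sum_nonneg)
  finally show ?thesis .
qed

lemma vnorm_model_le:
  assumes "0 < N"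
  shows "vnorm N (\<lambda>n. model M1 J Q R1 R2 H T A B C n)
    \<le> frob3 N J Q T * (\<Sum>r1<R1. \<Sum>r2<R2.
          vnorm_inf N (\<lambda>n. \<Sum>i<M1. H n i * A i r1) * vnorm J (\<lambda>j. B r1 j r2) * vnorm Q (C r2))"
proof -
  define HA where "HA = (\<lambda>r1 n. \<Sum>i<M1. H n i * A i r1)"
  define BC where "BC r1 r2 n = tensor_contract J Q (T n) (\<lambda>j. B r1 j r2) (C r2)" for r1 r2 n
  have "vnorm N (\<lambda>n. model M1 J Q R1 R2 H T A B C n)
      = vnorm N (\<lambda>n. \<Sum>r1<R1. \<Sum>r2<R2. HA r1 n * BC r1 r2 n)"
    by (simp add: model_conv_tensor_contract HA_def BC_def)
  also have "\<dots> \<le> (\<Sum>r1<R1. \<Sum>r2<R2. vnorm N (\<lambda>n. HA r1 n * BC r1 r2 n))"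
    by (rule order_trans[OF vnorm_sum_le sum_mono]) (auto intro: vnorm_sum_le)
  also have "\<dots> \<le> (\<Sum>r1<R1. \<Sum>r2<R2. vnorm_inf N (HA r1) * (frob3 N J Q T * (vnorm J (\<lambda>j. B r1 j r2) * vnorm Q (C r2))))"
    unfolding BC_def
    by (intro sum_mono order_trans[OF vnorm_mult_le[OF assms]] mult_left_mono vnorm_tensor_contract_le
        vnorm_inf_nonneg[OF assms])
  also have "\<dots> = frob3 N J Q T * (\<Sum>r1<R1. \<Sum>r2<R2. vnorm_inf N (HA r1) * vnorm J (\<lambda>j. B r1 j r2) * vnorm Q (C r2))"
    by (simp add: sum_distrib_left mult_ac)
  finally show ?thesis
    by (simp add: HA_def)
qed

lemma resid_conv_vnorm:
  "resid N M1 J Q R1 R2 yv H T A B C = vnorm N (\<lambda>n. yv n - model M1 J Q R1 R2 H T A B C n)"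
  by (simp add: resid_def vnorm_def)

lemma resid_bdd_below: "bdd_below ((\<lambda>(A, B, C). resid N M1 J Q R1 R2 yv H T A B C) ` S)"
  by (rule bdd_belowI[of _ 0]) (auto simp: resid_conv_vnorm vnorm_nonneg)

lemma resid_compressed_le:
  assumes "0 < N"
  shows "(INF (A, B, C) \<in> UNIV. resid N M1 M2t Pt R1 R2 yv H (Mtilde M2 P U2 U3 T) A B C)
    \<le> resid N M1 M2 P R1 R2 yv H T As Bs Cs
      + frob3 N M2 P (\<lambda>n j p. T n j p - Mhat M2 P M2t Pt U2 U3 T n j p)
        * (\<Sum>r1<R1. \<Sum>r2<R2. vnorm_inf N (\<lambda>n. \<Sum>i<M1. H n i * As i r1)
             * vnorm M2 (\<lambda>j. Bs r1 j r2) * vnorm P (Cs r2))"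
proof -
  let ?model = "model M1 M2 P R1 R2 H"
  let ?D = "\<lambda>n j p. T n j p - Mhat M2 P M2t Pt U2 U3 T n j p"
  define Bt where "Bt = (\<lambda>r1 k r2. \<Sum>j<M2. of_real (U2 j k) * Bs r1 j r2)"
  define Ct where "Ct = (\<lambda>r2 q. \<Sum>p<P. of_real (U3 p q) * Cs r2 p)"
  have "(INF (A, B, C) \<in> UNIV. resid N M1 M2t Pt R1 R2 yv H (Mtilde M2 P U2 U3 T) A B C)
      \<le> resid N M1 M2t Pt R1 R2 yv H (Mtilde M2 P U2 U3 T) As Bt Ct"
    using cINF_lower[OF resid_bdd_below, of "(As, Bt, Ct)"] by simp
  also have "\<dots> = vnorm N (\<lambda>n. (yv n - ?model T As Bs Cs n) + ?model ?D As Bs Cs n)"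
    by (simp add: resid_conv_vnorm Bt_def Ct_def model_Mtilde_eq_model_Mhat model_diff[symmetric])
  also have "\<dots> \<le> resid N M1 M2 P R1 R2 yv H T As Bs Cs + vnorm N (\<lambda>n. ?model ?D As Bs Cs n)"
    unfolding resid_conv_vnorm by (rule vnorm_triangle)
  finally show ?thesis
    using vnorm_model_le[OF assms, of M1 M2 P R1 R2 H ?D As Bs Cs] by linarith
qed

theorem theorem2:
  fixes x y :: "int \<Rightarrow> complex" and t0 :: int
    and N M1 M2 P R1 R2 M2t Pt :: nat
    and U2 U3 :: "nat \<Rightarrow> nat \<Rightarrow> real"
    and As Cs :: "nat \<Rightarrow> nat \<Rightarrow> complex" and Bs :: "nat \<Rightarrow> nat \<Rightarrow> nat \<Rightarrow> complex"
  assumes pos: "0 < N" "0 < M1" "0 < M2" "0 < P" "0 < R1" "0 < R2" "0 < M2t" "0 < Pt"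
    and le: "M2t \<le> M2" "Pt \<le> P"
    and U2: "orthonormal_cols M2 M2t U2"
    and U3: "orthonormal_cols P Pt U3"
    and opt: "\<forall>A B C. resid N M1 M2 P R1 R2 (yvec y t0) (Hmat x t0) (Mten x t0) As Bs Cs
                      \<le> resid N M1 M2 P R1 R2 (yvec y t0) (Hmat x t0) (Mten x t0) A B C"
  shows "(INF (A, B, C) \<in> UNIV.
            resid N M1 M2t Pt R1 R2 (yvec y t0) (Hmat x t0) (Mtilde M2 P U2 U3 (Mten x t0)) A B C)
         \<le> resid N M1 M2 P R1 R2 (yvec y t0) (Hmat x t0) (Mten x t0) As Bs Cs
           + frob3 N M2 P (\<lambda>n j p. Mten x t0 n j p - Mhat M2 P M2t Pt U2 U3 (Mten x t0) n j p)
             * (\<Sum>r1<R1. \<Sum>r2<R2.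
                  vnorm_inf N (\<lambda>n. \<Sum>i<M1. Hmat x t0 n i * As i r1)
                  * vnorm M2 (\<lambda>j. Bs r1 j r2) * vnorm P (\<lambda>p. Cs r2 p))"
  using resid_compressed_le[OF pos(1)] by simp

end
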